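(* Let $p>2$ and $K/\mathbb{Q}_p$ finite unramified. For each $p$-bounded and non-Steinberg Hodge type $\underline{r}$, there exist a non-scalar tame inertial type $\tau$ and a profile $J\subset\mathbb{Z}/f'\mathbb{Z}$ such that $\underline{r}\sim r(\tau,J)$.
   Context: $K/\mathbb{Q}_p$ is unramified of degree $f$ with residue field $k$, embeddings $\kappa_i:k\hookrightarrow\overline{\mathbb{F}}_p$ indexed by $i\in\mathbb{Z}/f\mathbb{Z}$ with $\kappa_{i+1}^p=\kappa_i$, and $\omega_i$ the fundamental character of level $f$ attached to $\kappa_i$. A Hodge type is a tuple of integers $\underline{r}=(r_{i,1}\ge r_{i,2})_{i\in\mathbb{Z}/f\mathbb{Z}}$; it is $p$-bounded if $r_{i,1}-r_{i,2}\le p$ for all $i$, Steinberg if $r_{i,1}-r_{i,2}=p$ for all $i$. Write $\underline{r}\sim\underline{r}'$ if $r'_{i,j}=r_{i,j}+\lambda_i$ for some $(\lambda_i)\in\mathbb{Z}^f$ with $\sum_{i=0}^{f-1}p^{f-i}\lambda_i\equiv0\pmod{p^f-1}$ (equivalently $\prod_i\omega_i^{\lambda_i}$ trivial). $E$ is a sufficiently large coefficient field with ring of integers $\mathcal{O}$ and residue field $\mathbb{F}$. A non-scalar tame inertial type $\tau=\eta\oplus\eta':I_K\to\mathrm{GL}_2(\mathcal{O})$ is principal series if $\eta,\eta'$ extend to $G_K$ and cuspidal otherwise ($\eta'=\eta^{p^f}$); $f'=f$ resp. $2f$. Let $k'$ be the degree $f'$ extension of $k$, embeddings $\kappa'_i$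 ($i\in\mathbb{Z}/f'\mathbb{Z}$, $(\kappa'_{i+1})^p=\kappa'_i$, extending $\kappa_{i\bmod f}$), $\omega'_i$ the corresponding fundamental characters of level $f'$ of $I_K$ and $\widetilde\omega'_i$ their Teichmüller lifts. Define $\gamma_i\in[0,p-1]$ by $\eta\eta'^{-1}=\prod_{i\in\mathbb{Z}/f'\mathbb{Z}}(\widetilde\omega'_i)^{\gamma_i}$. A profile is any $J\subset\mathbb{Z}/f'\mathbb{Z}$ (principal series) or one with $i\in J\iff i+f\notin J$ (cuspidal). With $\delta_S$ the indicator of $S$: $s_{J,i}=p-1-\gamma_i-\delta_{J^c}(i)$ if $i-1\in J$, $s_{J,i}=\gamma_i-\delta_J(i)$ if $i-1\notin J$ ($f$-periodic, in $[-1,p-1]$); $t_{J,i}=\gamma_i+\delta_{J^c}(i)$ if $i-1\in J$, $0$ otherwise. $\Theta_J:k^\times\to\mathbb{F}^\times$ is the character with $\Theta_J\circ N_{k'/k}=\eta'\prod_{i}(\kappa'_i)^{t_{J,i}}$ ($\eta'$ viewed as a character of $k'^\times$ via the Artin map of the totally tamely ramified extension trivializing $\tau$); via local class field theory (uniformizers $\leftrightarrow$ geometric Frobenius) write $\Theta_J=\prod_{i=0}^{f-1}\omega_i^{\theta_{J,i}}$. Then $r(\tau,J)$ is the Hodge type with $r_{i,1}=1-\theta_{J,i}$, $r_{i,2}=-s_{J,i}-\theta_{J,i}$, well defined up to $\sim$. *)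

theory Defs
  imports Main "HOL-Number_Theory.Cong"
begin

text \<open>
  Indices in Z/fZ (resp. Z/f'Z) are represented by naturals
  i < f (resp. i < f'). A tame character of I_K of level n with values in O^x (a Teichmueller
  lift) or in F^x is encoded by its exponent e (an integer taken modulo p^n - 1) with respect
  to the fundamental character of level n attached to the embedding kappa'_0; since
  (kappa'_(i+1))^p = kappa'_i, one has omega'_i = omega'_0^(p^(n-i)). Characters of the
  residue field are encoded likewise (kappa'_i corresponds to omega'_i under the Artin map
  normalised with uniformizers corresponding to geometric Frobenius).
\<close>

text \<open>Hodge types: r i = (r_(i,1), r_(i,2)) for i < f.\<close>
definition hodge_type :: "nat \<Rightarrow> (nat \<Rightarrow> int \<times> int) \<Rightarrow> bool" where
  "hodge_type f r \<longleftrightarrow> (\<forall>i<f. snd (r i) \<le> fst (r i))"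

definition p_bounded :: "nat \<Rightarrow> nat \<Rightarrow> (nat \<Rightarrow> int \<times> int) \<Rightarrow> bool" where
  "p_bounded p f r \<longleftrightarrow> (\<forall>i<f. fst (r i) - snd (r i) \<le> int p)"

definition steinberg :: "nat \<Rightarrow> nat \<Rightarrow> (nat \<Rightarrow> int \<times> int) \<Rightarrow> bool" where
  "steinberg p f r \<longleftrightarrow> (\<forall>i<f. fst (r i) - snd (r i) = int p)"

definition hodge_equiv :: "nat \<Rightarrow> nat \<Rightarrow> (nat \<Rightarrow> int \<times> int) \<Rightarrow> (nat \<Rightarrow> int \<times> int) \<Rightarrow> bool" where
  "hodge_equiv p f r r' \<longleftrightarrow>
     (\<exists>lam :: nat \<Rightarrow> int.
        (\<forall>i<f. fst (r' i) = fst (r i) + lam i \<and> snd (r' i) = snd (r i) + lam i) \<and>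
        [(\<Sum>i<f. int p ^ (f - i) * lam i) = 0] (mod (int p ^ f - 1)))"

text \<open>f' = f (principal series) or 2f (cuspidal).\<close>
definition fprime :: "nat \<Rightarrow> bool \<Rightarrow> nat" where
  "fprime f cusp = (if cusp then 2 * f else f)"

text \<open>Non-scalar tame inertial type eta (+) eta' with exponents a, a' (level f').
  Principal series: eta, eta' extend to G_K, i.e. are of level f.
  Cuspidal: eta' = eta^(p^f), of level 2f.\<close>
definition tame_inertial_type :: "nat \<Rightarrow> nat \<Rightarrow> bool \<Rightarrow> int \<Rightarrow> int \<Rightarrow> bool" where
  "tame_inertial_type p f cusp a a' \<longleftrightarrow>
     (let M = int p ^ fprime f cusp - 1 in
       \<not> [a = a'] (mod M) \<and> (cusp \<longrightarrow> [a' = int p ^ f * a] (mod M)))"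

text \<open>gamma_i in [0,p-1] with eta eta'^(-1) = prod_i (omega'_i~)^(gamma_i): the base-p digits
  of (a - a') mod (p^f' - 1), the weight of index i being p^(f'-i) (p^0 for i = 0).\<close>
definition gamma :: "nat \<Rightarrow> nat \<Rightarrow> bool \<Rightarrow> int \<Rightarrow> int \<Rightarrow> nat \<Rightarrow> int" where
  "gamma p f cusp a a' i =
     (let f' = fprime f cusp; M = int p ^ f' - 1 in
       (((a - a') mod M) div (int p ^ ((f' - i) mod f'))) mod int p)"

definition profile :: "nat \<Rightarrow> bool \<Rightarrow> nat set \<Rightarrow> bool" where
  "profile f cusp J \<longleftrightarrow> J \<subseteq> {..<fprime f cusp} \<and>
     (cusp \<longrightarrow> (\<forall>i<2 * f. i \<in> J \<longleftrightarrow> (i + f) mod (2 * f) \<notin> J))"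

definition ind :: "nat set \<Rightarrow> nat \<Rightarrow> int" where
  "ind S i = (if i \<in> S then 1 else 0)"

definition prev_idx :: "nat \<Rightarrow> bool \<Rightarrow> nat \<Rightarrow> nat" where
  "prev_idx f cusp i = (i + fprime f cusp - 1) mod fprime f cusp"

definition s_J :: "nat \<Rightarrow> nat \<Rightarrow> bool \<Rightarrow> int \<Rightarrow> int \<Rightarrow> nat set \<Rightarrow> nat \<Rightarrow> int" where
  "s_J p f cusp a a' J i =
     (if prev_idx f cusp i \<in> J
      then int p - 1 - gamma p f cusp a a' i - ind (- J) i
      else gamma p f cusp a a' i - ind J i)"

definition t_J :: "nat \<Rightarrow> nat \<Rightarrow> bool \<Rightarrow> int \<Rightarrow> int \<Rightarrow> nat set \<Rightarrow> nat \<Rightarrow> int" where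
  "t_J p f cusp a a' J i =
     (if prev_idx f cusp i \<in> J then gamma p f cusp a a' i + ind (- J) i else 0)"

text \<open>theta represents Theta_J = prod_(i<f) omega_i^(theta_i), characterised by
  Theta_J o N_(k'/k) = eta' prod_i (kappa'_i)^(t_(J,i)); N_(k'/k) is x ^ (1 + p^f) in the
  cuspidal case and the identity in the principal series case.\<close>
definition Theta_exps :: "nat \<Rightarrow> nat \<Rightarrow> bool \<Rightarrow> int \<Rightarrow> int \<Rightarrow> nat set \<Rightarrow> (nat \<Rightarrow> int) \<Rightarrow> bool" where
  "Theta_exps p f cusp a a' J \<theta> \<longleftrightarrow>
     (let f' = fprime f cusp in
       [(\<Sum>i<f. int p ^ (f - i) * \<theta> i) * (if cusp then 1 + int p ^ f else 1)
          = a' + (\<Sum>i<f'. int p ^ (f' - i) * t_J p f cusp a a' J i)] (mod (int p ^ f' - 1)))"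

definition r_tau_J :: "nat \<Rightarrow> nat \<Rightarrow> bool \<Rightarrow> int \<Rightarrow> int \<Rightarrow> nat set \<Rightarrow> (nat \<Rightarrow> int) \<Rightarrow> nat \<Rightarrow> int \<times> int" where
  "r_tau_J p f cusp a a' J \<theta> i = (1 - \<theta> i, - s_J p f cusp a a' J i - \<theta> i)"

end

theory Submission
  imports Defs
begin

text \<open>
  With \<open>\<theta>\<^sub>i = 1 - r\<^sub>i\<^sub>,\<^sub>1\<close>, the Hodge type \<open>r(\<tau>,J)\<close> is \<open>r\<close> itself as soon as
  \<open>s\<^sub>J\<^sub>,\<^sub>i = d\<^sub>i - 1\<close> for all \<open>i\<close>, where \<open>d\<^sub>i = r\<^sub>i\<^sub>,\<^sub>1 - r\<^sub>i\<^sub>,\<^sub>2 \<in> [0,p]\<close>.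
  For a given profile \<open>J\<close> this equation determines \<open>\<gamma>\<^sub>i\<close>, and \<open>\<gamma>\<^sub>i \<in> [0,p-1]\<close> provided
  \<open>J\<close> jumps at \<open>i\<close> (i.e. \<open>i - 1 \<in> J \<noteq> i \<in> J\<close>) when \<open>d\<^sub>i = 0\<close> and does not jump when
  \<open>d\<^sub>i = p\<close>. A prescribed jump pattern on \<open>0, \<dots>, f-1\<close> is realised by a principal series profile
  if the number of jumps is even and by a cuspidal one if it is odd. If some \<open>d\<^sub>i\<close> lies strictly
  between \<open>0\<close> and \<open>p\<close> the parity is ours to choose and we go cuspidal, where \<open>\<gamma>\<^sub>i+\<^sub>f = p-1-\<gamma>\<^sub>i\<close>
  makes \<open>\<tau>\<close> non-scalar; otherwise all \<open>\<gamma>\<^sub>i \<in> {0, p-1}\<close>, and non-Steinberg forces a jump, so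
  \<open>\<gamma>\<close> is not constant.
  Finally \<open>a - a'\<close> is read off from the digits \<open>\<gamma>\<close> and \<open>a'\<close> from the congruence defining
  \<open>\<Theta>\<^sub>J\<close>. In the cuspidal case the constraint \<open>a' = p\<^sup>f a\<close> is compatible with both because
  \<open>(p\<^sup>f - 1) \<Sum> p\<^sup>2\<^sup>f\<^sup>-\<^sup>i t\<^sub>J\<^sub>,\<^sub>i + \<Sum> p\<^sup>2\<^sup>f\<^sup>-\<^sup>i \<gamma>\<^sub>i \<equiv> 0 (mod p\<^sup>2\<^sup>f - 1)\<close>, which follows
  from \<open>\<gamma>\<^sub>i + t\<^sub>J\<^sub>,\<^sub>i\<^sub>+\<^sub>f - t\<^sub>J\<^sub>,\<^sub>i = [i \<in> J] - 1 + p [i-1 \<notin> J]\<close> by rotating indices.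
\<close>

section \<open>Exponents of products of fundamental characters\<close>

text \<open>\<^term>\<open>char_exponent (int p) n g\<close> is the exponent, relative to \<open>\<omega>'\<^sub>0\<close>, of
  \<open>\<Prod>\<^sub>i\<^sub><\<^sub>n \<omega>'\<^sub>i\<^bsup>g i\<^esup>\<close>, as in the definitions of \<^const>\<open>Theta_exps\<close> and
  \<^const>\<open>gamma\<close>.\<close>

definition char_exponent :: "int \<Rightarrow> nat \<Rightarrow> (nat \<Rightarrow> int) \<Rightarrow> int" where
  "char_exponent q n g = (\<Sum>i<n. q ^ (n - i) * g i)"

lemma char_exponent_add: "char_exponent q n (\<lambda>i. g i + h i) = char_exponent q n g + char_exponent q n h"
  by (simp add: char_exponent_def sum.distrib distrib_left)

lemma char_exponent_diff: "char_exponent q n (\<lambda>i. g i - h i) = char_exponent q n g - char_exponent q n h"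
  by (simp add: char_exponent_def sum_subtractf right_diff_distrib)

lemma char_exponent_cmult: "char_exponent q n (\<lambda>i. c * g i) = c * char_exponent q n g"
  by (simp add: char_exponent_def sum_distrib_left mult.left_commute)

lemma pow_cong_mod_pow_minus_one:
  fixes q :: int
  assumes "a mod n = b mod n"
  shows "[q ^ a = q ^ b] (mod q ^ n - 1)"
proof -
  have unit: "[q ^ n = 1] (mod q ^ n - 1)" by (simp add: cong_iff_dvd_diff)
  have reduce: "[q ^ x = q ^ (x mod n)] (mod q ^ n - 1)" for x
  proof -
    have "q ^ x = q ^ (x mod n) * (q ^ n) ^ (x div n)"
      by (metis mult.commute power_add power_mult div_mult_mod_eq)
    also have "[\<dots> = q ^ (x mod n) * 1 ^ (x div n)] (mod q ^ n - 1)"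
      by (intro cong_scalar_left cong_pow unit)
    finally show ?thesis by simp
  qed
  show ?thesis using reduce[of a] reduce[of b] assms by (metis cong_sym cong_trans)
qed

lemma rotate_mod_inverse:
  fixes i m n :: nat
  assumes "i < n" and "m \<le> n"
  shows "((i + m) mod n + (n - m)) mod n = i" and "((i + (n - m)) mod n + m) mod n = i"
proof -
  have "((i + m) mod n + (n - m)) mod n = (i + m + (n - m)) mod n" by (simp add: mod_add_left_eq)
  also have "\<dots> = i" using assms by simp
  finally show "((i + m) mod n + (n - m)) mod n = i" .
  have "((i + (n - m)) mod n + m) mod n = (i + (n - m) + m) mod n" by (simp add: mod_add_left_eq)
  also have "\<dots> = i" using assms by simp
  finally show "((i + (n - m)) mod n + m) mod n = i" .
qed

lemma char_exponent_rotate_cong: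
  fixes q :: int
  assumes "m \<le> n"
  shows "[q ^ (n - m) * char_exponent q n (\<lambda>i. g ((i + m) mod n)) = char_exponent q n g]
           (mod q ^ n - 1)"
proof -
  have exps: "(n - m + (n - i)) mod n = (n - (i + m) mod n) mod n" if "i < n" for i
  proof (cases "i + m < n")
    case True
    then have "n - m + (n - i) = (n - (i + m)) + n" by simp
    then show ?thesis using True by (simp only: mod_add_self2 mod_less)
  next
    case False
    then have "(i + m) mod n = i + m - n" using that assms by (simp add: le_mod_geq)
    then show ?thesis using False that assms by (simp add: add.commute)
  qed
  have "q ^ (n - m) * char_exponent q n (\<lambda>i. g ((i + m) mod n))
        = (\<Sum>i<n. q ^ (n - m + (n - i)) * g ((i + m) mod n))"
    unfolding char_exponent_def sum_distrib_left by (rule sum.cong) (simp_all only: power_add mult.assoc)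
  also have "[\<dots> = (\<Sum>i<n. q ^ (n - (i + m) mod n) * g ((i + m) mod n))] (mod q ^ n - 1)"
    by (intro cong_sum cong_scalar_right pow_cong_mod_pow_minus_one exps) simp
  also have "(\<Sum>i<n. q ^ (n - (i + m) mod n) * g ((i + m) mod n)) = char_exponent q n g"
    unfolding char_exponent_def
    by (rule sum.reindex_bij_witness[where i="\<lambda>j. (j + (n - m)) mod n" and j="\<lambda>i. (i + m) mod n"])
       (use assms rotate_mod_inverse in auto)
  finally show ?thesis .
qed

lemma char_exponent_half_turn_cong:
  fixes q :: int
  shows "[q ^ f * char_exponent q (2 * f) g = char_exponent q (2 * f) (\<lambda>i. g ((i + f) mod (2 * f)))]
           (mod q ^ (2 * f) - 1)"
proof -
  have "char_exponent q (2 * f) (\<lambda>i. g (((i + f) mod (2 * f) + f) mod (2 * f))) = char_exponent q (2 * f) g"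
    unfolding char_exponent_def by (intro sum.cong) (simp_all add: mod_add_left_eq add.assoc flip: mult_2)
  then show ?thesis
    using char_exponent_rotate_cong[of f "2 * f" q "\<lambda>i. g ((i + f) mod (2 * f))"] by simp
qed

lemma digit_expansion:
  fixes b :: int and c :: "nat \<Rightarrow> int"
  assumes "b > 0" and "\<forall>e<n. 0 \<le> c e \<and> c e < b"
  shows "0 \<le> (\<Sum>e<n. c e * b ^ e) \<and> (\<Sum>e<n. c e * b ^ e) < b ^ n \<and>
         (\<forall>e<n. ((\<Sum>e<n. c e * b ^ e) div b ^ e) mod b = c e)"
  using assms(2)
proof (induction n arbitrary: c)
  case 0
  then show ?case by simp
next
  case (Suc n)
  define N where "N = (\<Sum>e<n. c (Suc e) * b ^ e)"
  have IH: "0 \<le> N \<and> N < b ^ n \<and> (\<forall>e<n. (N div b ^ e) mod b = c (Suc e))"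
    using Suc.IH[of "\<lambda>e. c (Suc e)"] Suc.prems unfolding N_def by auto
  have split: "(\<Sum>e<Suc n. c e * b ^ e) = c 0 + b * N"
    unfolding N_def by (subst sum.lessThan_Suc_shift) (simp add: sum_distrib_left mult_ac del: sum.lessThan_Suc)
  have c0: "0 \<le> c 0" "c 0 < b" using Suc.prems by auto
  have "b * N \<le> b * (b ^ n - 1)" using IH assms(1) by (intro mult_left_mono) auto
  then have bound: "c 0 + b * N < b ^ Suc n" using c0 by (simp add: algebra_simps)
  have "((c 0 + b * N) div b ^ e) mod b = c e" if "e < Suc n" for e
  proof (cases e)
    case 0
    then show ?thesis using c0 by simp
  next
    case (Suc e')
    have "(c 0 + b * N) div b ^ e = ((c 0 + b * N) div b) div b ^ e'"
      using Suc assms(1) by (simp add: zdiv_zmult2_eq)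
    also have "(c 0 + b * N) div b = N" using c0 assms(1) by simp
    finally show ?thesis using IH Suc that by simp
  qed
  then show ?case unfolding split using IH c0 bound by simp
qed

lemma reflect_mod_involution: "i < (n::nat) \<Longrightarrow> (n - (n - i) mod n) mod n = i"
  by (cases "i = 0") auto

lemma char_exponent_digits:
  fixes q :: int and \<gamma> :: "nat \<Rightarrow> int"
  assumes q: "q > 1" and n: "n > 0" and digits: "\<forall>i<n. 0 \<le> \<gamma> i \<and> \<gamma> i < q"
    and not_zero: "\<exists>i<n. \<gamma> i \<noteq> 0" and not_top: "\<exists>i<n. \<gamma> i \<noteq> q - 1"
  defines "D \<equiv> char_exponent q n \<gamma> mod (q ^ n - 1)"
  shows "D \<noteq> 0" and "\<forall>i<n. (D div q ^ ((n - i) mod n)) mod q = \<gamma> i"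
proof -
  define E where "E = (\<Sum>e<n. \<gamma> ((n - e) mod n) * q ^ e)"
  have "\<forall>e<n. 0 \<le> \<gamma> ((n - e) mod n) \<and> \<gamma> ((n - e) mod n) < q" using digits n by auto
  from digit_expansion[OF _ this] q
  have E_range: "0 \<le> E" "E < q ^ n" and E_digits: "\<forall>e<n. (E div q ^ e) mod q = \<gamma> ((n - e) mod n)"
    unfolding E_def by auto
  have digit_i: "(E div q ^ ((n - i) mod n)) mod q = \<gamma> i" if "i < n" for i
    using E_digits reflect_mod_involution[OF that] n by simp
  have "E = (\<Sum>i<n. q ^ ((n - i) mod n) * \<gamma> i)"
    unfolding E_def
    by (rule sum.reindex_bij_witness[where i="\<lambda>i. (n - i) mod n" and j="\<lambda>i. (n - i) mod n"])
       (auto simp: reflect_mod_involution mult.commute)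
  also have "[\<dots> = char_exponent q n \<gamma>] (mod q ^ n - 1)"
    unfolding char_exponent_def
    by (intro cong_sum cong_scalar_right pow_cong_mod_pow_minus_one) simp
  finally have "D = E mod (q ^ n - 1)" unfolding D_def cong_def by simp
  moreover have "E \<noteq> q ^ n - 1"
  proof
    assume top: "E = q ^ n - 1"
    have "q ^ n - 1 = (\<Sum>e<n. (q - 1) * q ^ e)"
      by (simp add: power_diff_1_eq sum_distrib_left)
    with digit_expansion[of q n "\<lambda>_. q - 1"] q
    have "\<forall>e<n. ((q ^ n - 1) div q ^ e) mod q = q - 1" by simp
    then have "\<forall>i<n. \<gamma> i = q - 1" using digit_i top n by auto
    then show False using not_top by auto
  qed
  ultimately have D_eq: "D = E" using E_range by simp
  show "\<forall>i<n. (D div q ^ ((n - i) mod n)) mod q = \<gamma> i" using digit_i D_eq by simp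
  show "D \<noteq> 0"
  proof
    assume "D = 0"
    then have "\<forall>i<n. \<gamma> i = 0" using digit_i D_eq by auto
    then show False using not_zero by auto
  qed
qed

lemma gamma_eq_digits:
  fixes \<gamma> :: "nat \<Rightarrow> int"
  assumes p: "p > 1" and f: "f \<ge> 1"
    and digits: "\<forall>i<fprime f cusp. 0 \<le> \<gamma> i \<and> \<gamma> i < int p"
    and not_zero: "\<exists>i<fprime f cusp. \<gamma> i \<noteq> 0" and not_top: "\<exists>i<fprime f cusp. \<gamma> i \<noteq> int p - 1"
    and diff: "[a - a' = char_exponent (int p) (fprime f cusp) \<gamma>] (mod int p ^ fprime f cusp - 1)"
  shows "\<forall>i<fprime f cusp. gamma p f cusp a a' i = \<gamma> i"
    and "\<not> [a = a'] (mod int p ^ fprime f cusp - 1)"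
proof -
  have "fprime f cusp > 0" using f by (simp add: fprime_def)
  note D = char_exponent_digits[OF _ this digits not_zero not_top]
  have diff_mod: "(a - a') mod (int p ^ fprime f cusp - 1)
        = char_exponent (int p) (fprime f cusp) \<gamma> mod (int p ^ fprime f cusp - 1)"
    using diff unfolding cong_def .
  show "\<forall>i<fprime f cusp. gamma p f cusp a a' i = \<gamma> i"
    using D(2) p unfolding gamma_def Let_def diff_mod by simp
  show "\<not> [a = a'] (mod int p ^ fprime f cusp - 1)"
    using D(1) p unfolding cong_iff_dvd_diff dvd_eq_mod_eq_0 diff_mod by simp
qed

section \<open>Tame inertial types with prescribed digits\<close>

text \<open>\<^const>\<open>t_J\<close> with prescribed digits \<open>\<gamma>\<close> in place of \<^const>\<open>gamma\<close>, which depends on the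
  pair \<open>a, a'\<close> still to be constructed.\<close>

definition t_digits :: "nat \<Rightarrow> bool \<Rightarrow> (nat \<Rightarrow> int) \<Rightarrow> nat set \<Rightarrow> nat \<Rightarrow> int" where
  "t_digits f cusp \<gamma> J i = (if prev_idx f cusp i \<in> J then \<gamma> i + ind (- J) i else 0)"

lemma t_J_eq_t_digits:
  "\<forall>i<fprime f cusp. gamma p f cusp a a' i = \<gamma> i \<Longrightarrow>
   char_exponent q (fprime f cusp) (t_J p f cusp a a' J) = char_exponent q (fprime f cusp) (t_digits f cusp \<gamma> J)"
  unfolding char_exponent_def t_J_def t_digits_def by (intro sum.cong) auto

lemma exists_principal_type_with_digits:
  fixes \<gamma> \<theta> :: "nat \<Rightarrow> int"
  assumes p: "p > 1" and f: "f \<ge> 1"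
    and digits: "\<forall>i<f. 0 \<le> \<gamma> i \<and> \<gamma> i < int p"
    and not_zero: "\<exists>i<f. \<gamma> i \<noteq> 0" and not_top: "\<exists>i<f. \<gamma> i \<noteq> int p - 1"
  shows "\<exists>a a'. tame_inertial_type p f False a a' \<and> (\<forall>i<f. gamma p f False a a' i = \<gamma> i) \<and>
           Theta_exps p f False a a' J \<theta>"
proof -
  define q where "q = int p"
  define a' where "a' = char_exponent q f \<theta> - char_exponent q f (t_digits f False \<gamma> J)"
  define a where "a = a' + char_exponent q f \<gamma>"
  have fp: "fprime f False = f" by (simp add: fprime_def)
  have "[a - a' = char_exponent (int p) (fprime f False) \<gamma>] (mod int p ^ fprime f False - 1)"
    by (simp add: a_def fp q_def)
  note G = gamma_eq_digits[OF p f _ _ _ this, unfolded fp, OF digits not_zero not_top]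
  have "tame_inertial_type p f False a a'"
    using G(2) by (simp add: tame_inertial_type_def fp)
  moreover have "Theta_exps p f False a a' J \<theta>"
    using t_J_eq_t_digits[of f False p a a' \<gamma> q J] G(1)
    by (simp add: Theta_exps_def fp a'_def q_def char_exponent_def)
  ultimately show ?thesis using G(1) by blast
qed

lemma profile_cuspidal_shift:
  "profile f True J \<Longrightarrow> i < 2 * f \<Longrightarrow> ((i + f) mod (2 * f) \<in> J) \<longleftrightarrow> i \<notin> J"
  unfolding profile_def by blast

lemma prev_idx_less: "f \<ge> 1 \<Longrightarrow> prev_idx f cusp i < fprime f cusp"
  unfolding prev_idx_def fprime_def by simp

lemma prev_idx_cuspidal_shift:
  assumes "f \<ge> 1"
  shows "prev_idx f True ((i + f) mod (2 * f)) = (prev_idx f True i + f) mod (2 * f)"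
proof -
  have prev: "prev_idx f True x = (x + (2 * f - 1)) mod (2 * f)" for x
    using assms by (simp add: prev_idx_def fprime_def)
  show ?thesis unfolding prev by (simp add: mod_add_left_eq mod_add_right_eq add_ac)
qed

lemma t_digits_cuspidal_balance:
  fixes \<gamma> :: "nat \<Rightarrow> int"
  assumes f: "f \<ge> 1" and J: "profile f True J"
    and complement: "\<forall>i<2 * f. \<gamma> ((i + f) mod (2 * f)) = int p - 1 - \<gamma> i"
    and i: "i < 2 * f"
  shows "\<gamma> i + t_digits f True \<gamma> J ((i + f) mod (2 * f)) - t_digits f True \<gamma> J i
           = ind J i - 1 + int p * ind (- J) (prev_idx f True i)"
proof -
  have "prev_idx f True i < 2 * f" using prev_idx_less[OF f, of True] by (simp add: fprime_def)
  then have "prev_idx f True ((i + f) mod (2 * f)) \<in> J \<longleftrightarrow> prev_idx f True i \<notin> J"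
    using profile_cuspidal_shift[OF J] by (simp add: prev_idx_cuspidal_shift[OF f])
  then show ?thesis
    using i profile_cuspidal_shift[OF J i] complement by (auto simp: t_digits_def ind_def)
qed

lemma cuspidal_char_exponent_cong:
  fixes \<gamma> :: "nat \<Rightarrow> int"
  assumes f: "f \<ge> 1" and J: "profile f True J"
    and complement: "\<forall>i<2 * f. \<gamma> ((i + f) mod (2 * f)) = int p - 1 - \<gamma> i"
  defines "t \<equiv> t_digits f True \<gamma> J"
  shows "[(int p ^ f - 1) * char_exponent (int p) (2 * f) t + char_exponent (int p) (2 * f) \<gamma> = 0]
           (mod int p ^ (2 * f) - 1)"
proof -
  define q where "q = int p"
  define n where "n = 2 * f"
  define prev where "prev = prev_idx f True"
  have per_index: "\<gamma> i + t ((i + f) mod n) - t i = ind J i - 1 + q * ind (- J) (prev i)"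
    if "i < n" for i
    using t_digits_cuspidal_balance[OF f J complement] that by (simp add: t_def q_def n_def prev_def)
  have half_turn:
    "[q ^ f * char_exponent q n t = char_exponent q n (\<lambda>i. t ((i + f) mod n))] (mod q ^ n - 1)"
    unfolding n_def by (rule char_exponent_half_turn_cong)
  have step: "[q * char_exponent q n (\<lambda>i. ind (- J) (prev i)) = char_exponent q n (ind (- J))] (mod q ^ n - 1)"
    using char_exponent_rotate_cong[of "n - 1" n q "ind (- J)"] f
    by (simp add: n_def prev_def prev_idx_def fprime_def)
  have "(q ^ f - 1) * char_exponent q n t + char_exponent q n \<gamma>
        = q ^ f * char_exponent q n t + char_exponent q n \<gamma> - char_exponent q n t"
    by (simp add: algebra_simps)
  also have "[\<dots> = char_exponent q n (\<lambda>i. t ((i + f) mod n)) + char_exponent q n \<gamma> - char_exponent q n t]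
               (mod q ^ n - 1)"
    by (intro cong_diff cong_add half_turn cong_refl)
  also have "char_exponent q n (\<lambda>i. t ((i + f) mod n)) + char_exponent q n \<gamma> - char_exponent q n t
             = char_exponent q n (\<lambda>i. \<gamma> i + t ((i + f) mod n) - t i)"
    by (simp add: char_exponent_add char_exponent_diff)
  also have "\<dots> = char_exponent q n (\<lambda>i. ind J i - 1 + q * ind (- J) (prev i))"
    unfolding char_exponent_def by (intro sum.cong) (simp_all add: per_index)
  also have "\<dots> = char_exponent q n (\<lambda>i. ind J i - 1) + q * char_exponent q n (\<lambda>i. ind (- J) (prev i))"
    by (simp add: char_exponent_add char_exponent_cmult)
  also have "[\<dots> = char_exponent q n (\<lambda>i. ind J i - 1) + char_exponent q n (ind (- J))] (mod q ^ n - 1)"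
    by (intro cong_add step cong_refl)
  also have "char_exponent q n (\<lambda>i. ind J i - 1) + char_exponent q n (ind (- J))
             = char_exponent q n (\<lambda>i. ind J i - 1 + ind (- J) i)"
    by (rule char_exponent_add[symmetric])
  also have "\<dots> = 0"
    unfolding char_exponent_def by (rule sum.neutral) (simp add: ind_def)
  finally show ?thesis by (simp add: q_def n_def)
qed

lemma exists_cuspidal_type_with_digits:
  fixes \<gamma> \<theta> :: "nat \<Rightarrow> int"
  assumes p: "p > 1" and f: "f \<ge> 1" and J: "profile f True J"
    and digits: "\<forall>i<2 * f. 0 \<le> \<gamma> i \<and> \<gamma> i < int p"
    and complement: "\<forall>i<2 * f. \<gamma> ((i + f) mod (2 * f)) = int p - 1 - \<gamma> i"
  shows "\<exists>a a'. tame_inertial_type p f True a a' \<and> (\<forall>i<2 * f. gamma p f True a a' i = \<gamma> i) \<and>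
           Theta_exps p f True a a' J \<theta>"
proof -
  define q where "q = int p"
  define P where "P = q ^ f"
  define M where "M = q ^ (2 * f) - 1"
  define S where "S = char_exponent q (2 * f) (t_digits f True \<gamma> J)"
  define T where "T = char_exponent q f \<theta>"
  define X where "X = char_exponent q (2 * f) \<gamma>"
  \<comment> \<open>\<open>a\<close> solves \<open>(1 + P) T \<equiv> P a + S\<close> modulo \<open>M = (P - 1)(P + 1)\<close>\<close>
  define a where "a = S + (P + 1) * (T - S)"
  define a' where "a' = P * a"
  have fp: "fprime f True = 2 * f" by (simp add: fprime_def)
  have M_factor: "M = (P - 1) * (P + 1)"
    by (simp add: M_def P_def power_mult power2_eq_square algebra_simps)
  have "M dvd (P - 1) * S + X"
    using cuspidal_char_exponent_cong[OF f J complement]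
    by (simp add: cong_iff_dvd_diff P_def M_def S_def X_def q_def)
  moreover have "a - a' - X = M * (S - T) - ((P - 1) * S + X)"
    by (simp add: a'_def a_def M_factor algebra_simps)
  ultimately have "[a - a' = X] (mod M)"
    unfolding cong_iff_dvd_diff by (metis dvd_diff dvd_triv_left)
  moreover have "\<exists>i<2 * f. \<gamma> i \<noteq> 0" and "\<exists>i<2 * f. \<gamma> i \<noteq> int p - 1"
  proof -
    have \<gamma>_f: "\<gamma> f = int p - 1 - \<gamma> 0" and "0 < 2 * f" and "f < 2 * f"
      using complement[rule_format, of 0] f by simp_all
    show "\<exists>i<2 * f. \<gamma> i \<noteq> 0"
    proof (cases "\<gamma> 0 = 0")
      case True
      then show ?thesis using \<gamma>_f p \<open>f < 2 * f\<close> by (intro exI[of _ f]) simp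
    qed (use \<open>0 < 2 * f\<close> in blast)
    show "\<exists>i<2 * f. \<gamma> i \<noteq> int p - 1"
    proof (cases "\<gamma> 0 = int p - 1")
      case True
      then show ?thesis using \<gamma>_f p \<open>f < 2 * f\<close> by (intro exI[of _ f]) simp
    qed (use \<open>0 < 2 * f\<close> in blast)
  qed
  ultimately have G: "\<forall>i<2 * f. gamma p f True a a' i = \<gamma> i" and "\<not> [a = a'] (mod M)"
    using gamma_eq_digits[OF p f, of True \<gamma> a a'] digits by (simp_all add: fp M_def X_def q_def)
  then have "tame_inertial_type p f True a a'"
    by (simp add: tame_inertial_type_def fp M_def q_def a'_def P_def)
  moreover have "[T * (1 + P) = a' + S] (mod M)"
  proof -
    have "T * (1 + P) - (a' + S) = M * (S - T)"
      by (simp add: a'_def a_def M_factor algebra_simps)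
    then show ?thesis by (simp add: cong_iff_dvd_diff)
  qed
  then have "Theta_exps p f True a a' J \<theta>"
    using t_J_eq_t_digits[of f True p a a' \<gamma> q J] G
    by (simp add: Theta_exps_def Let_def fp T_def S_def P_def M_def q_def char_exponent_def)
  ultimately show ?thesis using G by blast
qed

section \<open>Solving \<open>s\<^sub>J\<^sub>,\<^sub>i = d\<^sub>i - 1\<close> for the digits\<close>

definition jumps_at :: "nat \<Rightarrow> bool \<Rightarrow> nat set \<Rightarrow> nat \<Rightarrow> bool" where
  "jumps_at f cusp J i \<longleftrightarrow> (prev_idx f cusp i \<in> J) \<noteq> (i \<in> J)"

definition profile_digit :: "nat \<Rightarrow> nat \<Rightarrow> bool \<Rightarrow> nat set \<Rightarrow> (nat \<Rightarrow> int) \<Rightarrow> nat \<Rightarrow> int" where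
  "profile_digit p f cusp J d i =
     (if prev_idx f cusp i \<in> J then int p - d (i mod f) - ind (- J) i else d (i mod f) - 1 + ind J i)"

lemma s_J_profile_digit:
  "gamma p f cusp a a' i = profile_digit p f cusp J d i \<Longrightarrow> s_J p f cusp a a' J i = d (i mod f) - 1"
  by (simp add: s_J_def profile_digit_def)

lemma profile_digit_range:
  assumes "0 \<le> d (i mod f)" and "d (i mod f) \<le> int p"
    and "d (i mod f) = 0 \<Longrightarrow> jumps_at f cusp J i" and "d (i mod f) = int p \<Longrightarrow> \<not> jumps_at f cusp J i"
  shows "0 \<le> profile_digit p f cusp J d i \<and> profile_digit p f cusp J d i < int p"
  using assms
  by (cases "d (i mod f) = 0"; cases "d (i mod f) = int p")
     (auto simp: profile_digit_def jumps_at_def ind_def)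

lemma profile_digit_complement:
  assumes f: "f \<ge> 1" and J: "profile f True J" and i: "i < 2 * f"
  shows "profile_digit p f True J d ((i + f) mod (2 * f)) = int p - 1 - profile_digit p f True J d i"
proof -
  have "((i + f) mod (2 * f)) mod f = i mod f"
    by (simp add: mod_mod_cancel)
  moreover have "prev_idx f True ((i + f) mod (2 * f)) \<in> J \<longleftrightarrow> prev_idx f True i \<notin> J"
    using profile_cuspidal_shift[OF J] prev_idx_less[OF f, of True]
    by (simp add: prev_idx_cuspidal_shift[OF f] fprime_def)
  ultimately show ?thesis
    using profile_cuspidal_shift[OF J i] by (auto simp: profile_digit_def ind_def)
qed

lemma principal_profile_digits_nonscalar:
  assumes p: "p > 1" and f: "f \<ge> 1" and J: "profile f False J"
    and extreme: "\<forall>i<f. (d i = 0 \<and> jumps_at f False J i) \<or> (d i = int p \<and> \<not> jumps_at f False J i)"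
    and jump: "\<exists>i<f. jumps_at f False J i"
  shows "\<exists>i<f. profile_digit p f False J d i \<noteq> 0"
    and "\<exists>i<f. profile_digit p f False J d i \<noteq> int p - 1"
proof -
  have digit: "profile_digit p f False J d i = (if i \<in> J then 0 else int p - 1)" if "i < f" for i
    using extreme[rule_format, OF that] that by (auto simp: profile_digit_def jumps_at_def ind_def)
  obtain i where i: "i < f" "jumps_at f False J i" using jump by blast
  have "prev_idx f False i < f" using prev_idx_less[OF f, of False] by (simp add: fprime_def)
  then obtain j k where "j < f" "j \<in> J" "k < f" "k \<notin> J"
    using i unfolding jumps_at_def by metis
  then show "\<exists>i<f. profile_digit p f False J d i \<noteq> 0"
    and "\<exists>i<f. profile_digit p f False J d i \<noteq> int p - 1"
    using digit p by force+
qed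

section \<open>Profiles with prescribed jumps\<close>

primrec parity_upto :: "(nat \<Rightarrow> bool) \<Rightarrow> nat \<Rightarrow> bool" where
  "parity_upto C 0 = C 0"
| "parity_upto C (Suc i) = (parity_upto C i \<noteq> C (Suc i))"

lemma parity_upto_flip: "parity_upto (C(k := \<not> C k)) i = (parity_upto C i \<noteq> (k \<le> i))"
  by (induction i) (auto simp: le_Suc_eq)

lemma exists_profile_with_jumps:
  fixes C :: "nat \<Rightarrow> bool"
  assumes f: "f \<ge> 1"
  defines "cusp \<equiv> parity_upto C (f - 1)"
  shows "\<exists>J. profile f cusp J \<and> (\<forall>i<f. jumps_at f cusp J i = C i)"
proof -
  define B where "B = {i. i < f \<and> parity_upto C i}"
  define J where "J = B \<union> {i. cusp \<and> f \<le> i \<and> i < 2 * f \<and> i - f \<notin> B}"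
  have "profile f cusp J"
    unfolding profile_def
  proof (intro conjI impI allI)
    show "J \<subseteq> {..<fprime f cusp}" by (auto simp: J_def B_def fprime_def)
    fix i assume "cusp" and "i < 2 * f"
    then show "i \<in> J \<longleftrightarrow> (i + f) mod (2 * f) \<notin> J"
      by (cases "i < f") (auto simp: J_def B_def le_mod_geq)
  qed
  moreover have "jumps_at f cusp J i = C i" if "i < f" for i
  proof (cases i)
    case 0
    have "prev_idx f cusp 0 \<notin> J"
      using f by (auto simp: prev_idx_def fprime_def J_def B_def cusp_def)
    moreover have "0 \<in> J \<longleftrightarrow> C 0" using f by (simp add: J_def B_def)
    ultimately show ?thesis using 0 by (simp add: jumps_at_def)
  next
    case (Suc k)
    then have "prev_idx f cusp i = k" using that by (simp add: prev_idx_def fprime_def)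
    then show ?thesis using Suc that by (auto simp: jumps_at_def J_def B_def)
  qed
  ultimately show ?thesis by blast
qed

lemma exists_jump_pattern:
  fixes d :: "nat \<Rightarrow> int"
  assumes "p > 0"
  shows "\<exists>C. (\<forall>i<f. d i = 0 \<longrightarrow> C i) \<and> (\<forall>i<f. d i = int p \<longrightarrow> \<not> C i) \<and>
             (\<not> parity_upto C (f - 1) \<longrightarrow> (\<forall>i<f. d i = 0 \<or> d i = int p))"
proof -
  define Z where "Z i = (d i = 0)" for i
  show ?thesis
  proof (cases "parity_upto Z (f - 1) \<or> (\<forall>i<f. d i = 0 \<or> d i = int p)")
    case True
    then show ?thesis using assms by (intro exI[of _ Z]) (auto simp: Z_def)
  next
    case False
    then obtain k where k: "k < f" "d k \<noteq> 0" "d k \<noteq> int p" by auto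
    have "parity_upto (Z(k := \<not> Z k)) (f - 1)"
      using False k(1) by (simp add: parity_upto_flip)
    then show ?thesis using assms k by (intro exI[of _ "Z(k := \<not> Z k)"]) (auto simp: Z_def)
  qed
qed

lemma exists_type_and_profile_with_s_J:
  fixes d \<theta> :: "nat \<Rightarrow> int"
  assumes p: "p > 1" and f: "f \<ge> 1"
    and d_range: "\<forall>i<f. 0 \<le> d i \<and> d i \<le> int p" and not_steinberg: "\<exists>i<f. d i \<noteq> int p"
  shows "\<exists>cusp a a' J. tame_inertial_type p f cusp a a' \<and> profile f cusp J \<and>
           Theta_exps p f cusp a a' J \<theta> \<and> (\<forall>i<f. s_J p f cusp a a' J i = d i - 1)"
proof -
  obtain C where C_zero: "\<forall>i<f. d i = 0 \<longrightarrow> C i" and C_top: "\<forall>i<f. d i = int p \<longrightarrow> \<not> C i"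
    and C_even: "\<not> parity_upto C (f - 1) \<longrightarrow> (\<forall>i<f. d i = 0 \<or> d i = int p)"
    using exists_jump_pattern[of p f d] p by auto
  define cusp where "cusp = parity_upto C (f - 1)"
  obtain J where J: "profile f cusp J" and jumps: "\<forall>i<f. jumps_at f cusp J i = C i"
    using exists_profile_with_jumps[OF f, of C] unfolding cusp_def by blast
  define \<gamma> where "\<gamma> = profile_digit p f cusp J d"
  have digits: "0 \<le> \<gamma> i \<and> \<gamma> i < int p" if "i < f" for i
    using profile_digit_range[of d i f p cusp J] d_range C_zero C_top jumps that
    by (simp add: \<gamma>_def)
  have "\<exists>a a'. tame_inertial_type p f cusp a a' \<and> (\<forall>i<fprime f cusp. gamma p f cusp a a' i = \<gamma> i) \<and>
          Theta_exps p f cusp a a' J \<theta>"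
  proof (cases cusp)
    case True
    have complement: "\<forall>i<2 * f. \<gamma> ((i + f) mod (2 * f)) = int p - 1 - \<gamma> i"
      using profile_digit_complement[OF f] J True by (simp add: \<gamma>_def)
    have "0 \<le> \<gamma> i \<and> \<gamma> i < int p" if "i < 2 * f" for i
    proof (cases "i < f")
      case False
      then have "\<gamma> i = int p - 1 - \<gamma> (i - f)"
        using complement[rule_format, of "i - f"] that by (simp add: le_mod_geq)
      moreover have "i - f < f" using False that by simp
      ultimately show ?thesis using digits[of "i - f"] by simp
    qed (use digits in blast)
    then show ?thesis
      using exists_cuspidal_type_with_digits[OF p f, of J \<gamma>] J True complement by (simp add: fprime_def)
  next
    case False
    obtain i where i: "i < f" "d i \<noteq> int p" using not_steinberg by blast
    then have "d i = 0" using C_even False unfolding cusp_def by blast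
    then have "\<exists>i<f. jumps_at f False J i" using C_zero jumps i(1) False by auto
    then have "\<exists>i<f. \<gamma> i \<noteq> 0" and "\<exists>i<f. \<gamma> i \<noteq> int p - 1"
      using principal_profile_digits_nonscalar[OF p f, of J d] J False C_even C_zero C_top jumps
      unfolding \<gamma>_def cusp_def by auto
    then show ?thesis
      using exists_principal_type_with_digits[OF p f, of \<gamma>] digits False by (simp add: fprime_def)
  qed
  then obtain a a' where type: "tame_inertial_type p f cusp a a'" and Theta: "Theta_exps p f cusp a a' J \<theta>"
    and gamma_eq: "\<forall>i<fprime f cusp. gamma p f cusp a a' i = \<gamma> i"
    by blast
  have "s_J p f cusp a a' J i = d i - 1" if "i < f" for i
    using s_J_profile_digit[of p f cusp a a' i J d] gamma_eq that by (simp add: \<gamma>_def fprime_def)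
  then show ?thesis using type J Theta by blast
qed

theorem proposition4p11:
  fixes p f :: nat and r :: "nat \<Rightarrow> int \<times> int"
  assumes "prime p" and "p > 2" and "f \<ge> 1"
    and "hodge_type f r" and "p_bounded p f r" and "\<not> steinberg p f r"
  shows "\<exists>cusp a a' J \<theta>. tame_inertial_type p f cusp a a' \<and> profile f cusp J \<and>
           Theta_exps p f cusp a a' J \<theta> \<and> hodge_equiv p f r (r_tau_J p f cusp a a' J \<theta>)"
proof -
  define d where "d i = fst (r i) - snd (r i)" for i
  define \<theta> where "\<theta> i = 1 - fst (r i)" for i
  have "\<forall>i<f. 0 \<le> d i \<and> d i \<le> int p" and "\<exists>i<f. d i \<noteq> int p"
    using assms(4-6) by (auto simp: hodge_type_def p_bounded_def steinberg_def d_def)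
  then obtain cusp a a' J where "tame_inertial_type p f cusp a a'" "profile f cusp J"
      "Theta_exps p f cusp a a' J \<theta>" and s_J: "\<forall>i<f. s_J p f cusp a a' J i = d i - 1"
    using exists_type_and_profile_with_s_J[of p f d \<theta>] assms(2,3) by auto
  moreover have "r_tau_J p f cusp a a' J \<theta> i = r i" if "i < f" for i
    using s_J that by (simp add: r_tau_J_def \<theta>_def d_def prod_eq_iff)
  then have "hodge_equiv p f r (r_tau_J p f cusp a a' J \<theta>)"
    unfolding hodge_equiv_def by (intro exI[of _ "\<lambda>_. 0"]) simp
  ultimately show ?thesis by blast
qed

end
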